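(* Let $\mathcal{A}$ be a semiprime unital algebra over a field $F$ with $\operatorname{char}(F)\neq2$. Then $\operatorname{QJCent}(\mathcal{A})=\operatorname{Cent}(\mathcal{A})$.
   Context: $\mathcal{A}$ is semiprime if $a\mathcal{A}a=\{0\}$ implies $a=0$. $x\circ y=xy+yx$. $\operatorname{QJCent}(\mathcal{A})$: linear $f:\mathcal{A}\to\mathcal{A}$ with $f(x)\circ y=x\circ f(y)$ for all $x,y$. $\operatorname{Cent}(\mathcal{A})$: linear $f$ with $f(xy)=f(x)y=xf(y)$ for all $x,y$. *)

theory Defs
  imports Complex_Main
begin

text \<open>An associative unital algebra over a field 'k is modelled by a type
'a of class ring_1 together with a scalar multiplication scale making 'a a
'k-vector space such that multiplication is 'k-bilinear (see algebra_over).\<close>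

definition algebra_over :: "('k::field \<Rightarrow> 'a::ring_1 \<Rightarrow> 'a) \<Rightarrow> bool" where
  "algebra_over scale \<longleftrightarrow> Vector_Spaces.vector_space scale \<and>
     (\<forall>c x y. scale c (x * y) = scale c x * y \<and> scale c (x * y) = x * scale c y)"

definition semiprime :: "'a::ring itself \<Rightarrow> bool" where
  "semiprime _ \<longleftrightarrow> (\<forall>a::'a. (\<forall>x. a * x * a = 0) \<longrightarrow> a = 0)"

definition jordan_prod :: "'a::ring \<Rightarrow> 'a \<Rightarrow> 'a" (infixl "\<circ>\<^sub>J" 70) where
  "x \<circ>\<^sub>J y = x * y + y * x"

definition QJCent :: "('k::field \<Rightarrow> 'a::ring_1 \<Rightarrow> 'a) \<Rightarrow> ('a \<Rightarrow> 'a) set" where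
  "QJCent scale = {f. Vector_Spaces.linear scale scale f \<and>
      (\<forall>x y. f x \<circ>\<^sub>J y = x \<circ>\<^sub>J f y)}"

definition Cent :: "('k::field \<Rightarrow> 'a::ring_1 \<Rightarrow> 'a) \<Rightarrow> ('a \<Rightarrow> 'a) set" where
  "Cent scale = {f. Vector_Spaces.linear scale scale f \<and>
      (\<forall>x y. f (x * y) = f x * y \<and> f (x * y) = x * f y)}"

end

theory Submission
  imports Defs
begin

text \<open>Put \<open>c = f 1\<close> for \<open>f \<in> QJCent\<close>. The Jordan identity with \<open>y = 1\<close> gives
\<open>2 f(x) = xc + cx\<close>; inserting this into the identity for general \<open>x, y\<close> shows that \<open>c\<close>
commutes with every commutator. In a semiprime ring such an element is central, so
\<open>2 f(x) = 2 cx\<close>, and since \<open>2\<close> is invertible \<open>f\<close> is left multiplication by a central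
element, i.e. a centroid element.\<close>

lemma semiprime_central_if_commutes_with_commutators:
  fixes c :: "'a::ring"
  assumes "semiprime TYPE('a)"
    and commutes: "\<And>x y. c * (x*y - y*x) = (x*y - y*x) * c"
  shows "c * x = x * c"
proof -
  \<comment> \<open>\<open>c\<close> commutes with \<open>[x,yx] = [x,y]x\<close> as well as with \<open>[x,y]\<close>.\<close>
  have annihilates: "(x*y - y*x) * (c*x - x*c) = 0" for x y
  proof -
    have "(x*y - y*x) * x * c = c * ((x*y - y*x) * x)"
      using commutes[of x "y*x"] by (simp add: algebra_simps)
    also have "\<dots> = (x*y - y*x) * c * x"
      using commutes[of x y] by (metis mult.assoc)
    finally show ?thesis by (simp add: algebra_simps)
  qed
  \<comment> \<open>Apply this to \<open>[x,yz] = [x,y]z + y[x,z]\<close>.\<close>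
  have annihilates_ideal: "(x*y - y*x) * z * (c*x - x*c) = 0" for x y z
  proof -
    have "x*(y*z) - (y*z)*x = (x*y - y*x)*z + y*(x*z - z*x)"
      by (simp add: algebra_simps)
    then have "(x*y - y*x)*z*(c*x - x*c) + y*((x*z - z*x)*(c*x - x*c)) = 0"
      using annihilates[of x "y*z"] by (simp add: algebra_simps)
    then show ?thesis using annihilates[of x z] by simp
  qed
  have "(c*x - x*c) * z * (c*x - x*c) = 0" for z
    using annihilates_ideal[of x c z] by (simp add: algebra_simps)
  then have "c*x - x*c = 0" using assms(1) unfolding semiprime_def by blast
  then show ?thesis by simp
qed

lemma (in vector_space) double_cancel:
  fixes x y :: 'b
  assumes "(2::'a) \<noteq> 0" and "x + x = y + y"
  shows "x = y"
proof -
  have double: "z + z = scale 2 z" for z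
    by (metis one_add_one scale_left_distrib scale_one)
  show ?thesis
    using assms double[of x] double[of y] by simp
qed

lemma QJCent_double_eq:
  assumes "f \<in> QJCent scale"
  shows "f x + f x = x * f 1 + f 1 * x"
proof -
  have "f x \<circ>\<^sub>J 1 = x \<circ>\<^sub>J f 1"
    using assms unfolding QJCent_def by blast
  then show ?thesis
    unfolding jordan_prod_def by simp
qed

lemma QJCent_one_commutes_with_commutators:
  assumes "f \<in> QJCent scale"
  shows "f 1 * (x*y - y*x) = (x*y - y*x) * f 1"
proof -
  have "f x \<circ>\<^sub>J y = x \<circ>\<^sub>J f y"
    using assms unfolding QJCent_def by blast
  then have "(f x + f x) * y + y * (f x + f x) = x * (f y + f y) + (f y + f y) * x"
    unfolding jordan_prod_def by (simp add: algebra_simps)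
  then show ?thesis
    unfolding QJCent_double_eq[OF assms] by (simp add: algebra_simps)
qed

lemma QJCent_subset_Cent:
  assumes "algebra_over scale" and "semiprime TYPE('a)" and "(2::'k) \<noteq> 0"
  shows "QJCent (scale :: 'k::field \<Rightarrow> 'a::ring_1 \<Rightarrow> 'a) \<subseteq> Cent scale"
proof
  fix f assume f: "f \<in> QJCent scale"
  define c where "c = f 1"
  have central: "c * x = x * c" for x
    unfolding c_def using assms(2) QJCent_one_commutes_with_commutators[OF f]
    by (rule semiprime_central_if_commutes_with_commutators)
  have "Vector_Spaces.vector_space scale"
    using assms(1) unfolding algebra_over_def by blast
  moreover have "f x + f x = c * x + c * x" for x
    using QJCent_double_eq[OF f, of x] central[of x] unfolding c_def by simp
  ultimately have f_eq: "f x = c * x" for x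
    using vector_space.double_cancel assms(3) by blast
  have "f (x * y) = f x * y \<and> f (x * y) = x * f y" for x y
  proof
    show "f (x * y) = f x * y"
      unfolding f_eq by (rule mult.assoc[symmetric])
    have "x * f y = x * c * y"
      unfolding f_eq by (rule mult.assoc[symmetric])
    also have "\<dots> = f (x * y)"
      unfolding f_eq central[of x, symmetric] by (rule mult.assoc)
    finally show "f (x * y) = x * f y" ..
  qed
  then show "f \<in> Cent scale"
    using f unfolding QJCent_def Cent_def by blast
qed

lemma Cent_subset_QJCent: "Cent scale \<subseteq> QJCent scale"
proof
  fix f assume f: "f \<in> Cent scale"
  then have left: "f (x * y) = f x * y" and right: "f (x * y) = x * f y" for x y
    unfolding Cent_def by blast+
  have "f x \<circ>\<^sub>J y = x \<circ>\<^sub>J f y" for x y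
    unfolding jordan_prod_def by (metis left right)
  then show "f \<in> QJCent scale"
    using f unfolding Cent_def QJCent_def by blast
qed

theorem proposition3p5:
  fixes scale :: "'k::field \<Rightarrow> 'a::ring_1 \<Rightarrow> 'a"
  assumes "algebra_over scale"
    and "semiprime TYPE('a)"
    and "(2::'k) \<noteq> 0"
  shows "QJCent scale = Cent scale"
  using QJCent_subset_Cent[OF assms] Cent_subset_QJCent by (rule equalityI)

end
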